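(* Let $T$ be a tree, let $f_t$ be a token-placement of $T$ with colors $\{1,2\}$ and let $f$ be a token-placement of $T$ with the same number of color-1 tokens as $f_t$. For an edge $e=xy$ of $T$, let $T(x)$ and $T(y)$ be the components of $T-e$ containing $x$ and $y$, and let $\mathrm{diff}_f(e)=\bigl|\,|\{v\in T(x): f(v)=1\}|-|\{v\in T(x): f_t(v)=1\}|\,\bigr|$. Let $D(f)=\sum_{e\in E(T)}\mathrm{diff}_f(e)$. If $D(f)\neq 0$, then there is an edge $uv$ of $T$ such that the token-placement $f'$ obtained from $f$ by swapping the tokens on $u$ and $v$ satisfies $D(f')=D(f)-1$.
   Context: A token-placement of a graph with color set $\{1,2\}$ is a surjective map from its vertex set to $\{1,2\}$. Swapping the tokens on adjacent vertices $u,v$ turns $f$ into $f'$ with $f'(u)=f(v)$, $f'(v)=f(u)$, $f'(w)=f(w)$ otherwise. Note $\mathrm{diff}_f(e)$ does not depend on which endpoint's side is used. *)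

theory Defs
  imports Main
begin

definition simple_graph :: "'a set \<Rightarrow> ('a \<Rightarrow> 'a \<Rightarrow> bool) \<Rightarrow> bool" where
  "simple_graph V E \<longleftrightarrow> finite V \<and> (\<forall>x y. E x y \<longrightarrow> x \<in> V \<and> y \<in> V)
      \<and> (\<forall>x y. E x y \<longrightarrow> E y x) \<and> (\<forall>x. \<not> E x x)"

definition connected_graph :: "'a set \<Rightarrow> ('a \<Rightarrow> 'a \<Rightarrow> bool) \<Rightarrow> bool" where
  "connected_graph V E \<longleftrightarrow> (\<forall>x\<in>V. \<forall>y\<in>V. E\<^sup>*\<^sup>* x y)"

definition is_cycle :: "('a \<Rightarrow> 'a \<Rightarrow> bool) \<Rightarrow> 'a list \<Rightarrow> bool" where
  "is_cycle E cs \<longleftrightarrow> length cs \<ge> 3 \<and> distinct cs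
      \<and> (\<forall>i. Suc i < length cs \<longrightarrow> E (cs ! i) (cs ! Suc i))
      \<and> E (last cs) (hd cs)"

definition is_tree :: "'a set \<Rightarrow> ('a \<Rightarrow> 'a \<Rightarrow> bool) \<Rightarrow> bool" where
  "is_tree V E \<longleftrightarrow> simple_graph V E \<and> V \<noteq> {} \<and> connected_graph V E
      \<and> (\<nexists>cs. is_cycle E cs)"

definition edges :: "('a \<Rightarrow> 'a \<Rightarrow> bool) \<Rightarrow> 'a set set" where
  "edges E = {{x, y} | x y. E x y}"

definition token_placement :: "'a set \<Rightarrow> ('a \<Rightarrow> nat) \<Rightarrow> bool" where
  "token_placement V f \<longleftrightarrow> f ` V = {1, 2}"

definition swap_tokens :: "('a \<Rightarrow> nat) \<Rightarrow> 'a \<Rightarrow> 'a \<Rightarrow> ('a \<Rightarrow> nat)" where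
  "swap_tokens f u v = f(u := f v, v := f u)"

definition comp_minus_edge :: "'a set \<Rightarrow> ('a \<Rightarrow> 'a \<Rightarrow> bool) \<Rightarrow> 'a set \<Rightarrow> 'a \<Rightarrow> 'a set" where
  "comp_minus_edge V E e x = {v \<in> V. (\<lambda>a b. E a b \<and> {a, b} \<noteq> e)\<^sup>*\<^sup>* x v}"

definition ones_in :: "('a \<Rightarrow> nat) \<Rightarrow> 'a set \<Rightarrow> nat" where
  "ones_in f S = card {v \<in> S. f v = 1}"

text \<open>diff_f(e), computed from the side of an (arbitrarily chosen) endpoint x of e;
  by the standing remark this does not depend on the choice.\<close>
definition diff_edge :: "'a set \<Rightarrow> ('a \<Rightarrow> 'a \<Rightarrow> bool) \<Rightarrow> ('a \<Rightarrow> nat) \<Rightarrow> ('a \<Rightarrow> nat) \<Rightarrow> 'a set \<Rightarrow> int" where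
  "diff_edge V E ft f e =
     (let x = (SOME x. x \<in> e); S = comp_minus_edge V E e x
      in \<bar>int (ones_in f S) - int (ones_in ft S)\<bar>)"

definition D_val :: "'a set \<Rightarrow> ('a \<Rightarrow> 'a \<Rightarrow> bool) \<Rightarrow> ('a \<Rightarrow> nat) \<Rightarrow> ('a \<Rightarrow> nat) \<Rightarrow> int" where
  "D_val V E ft f = (\<Sum>e\<in>edges E. diff_edge V E ft f e)"

end

theory Submission
  imports Defs
begin

text \<open>
  Write \<open>T(u,v)\<close> for the component of \<open>T - uv\<close> containing \<open>u\<close> and
  \<open>X(S)\<close> for the number of 1-tokens of \<open>f\<close> minus that of \<open>f\<^sub>t\<close> in \<open>S\<close>
  (\<open>side u v\<close> and \<open>excess ft f S\<close> below), so that
  \<open>diff\<^sub>f(uv) = |X(T(u,v))|\<close> and \<open>X(T(v,u)) = -X(T(u,v))\<close>. The set \<open>T(u,v)\<close> is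
  \<open>u\<close> together with the disjoint sets \<open>T(w,u)\<close> for the other neighbours \<open>w\<close> of \<open>u\<close>.
  Hence an oriented edge \<open>(u,v)\<close> with \<open>X(T(u,v)) > 0\<close> and \<open>|T(u,v)|\<close> minimal has
  \<open>f(u) = 1\<close>, and among those with \<open>f(u) = 1\<close> one with \<open>|T(v,u)|\<close> minimal has
  \<open>f(v) = 2\<close>. Swapping the tokens on \<open>u\<close> and \<open>v\<close> then lowers \<open>diff\<^sub>f(uv)\<close> by one
  and leaves every other edge untouched, since \<open>u\<close> and \<open>v\<close> lie on the same side of it.
\<close>

definition walk :: "('a \<Rightarrow> 'a \<Rightarrow> bool) \<Rightarrow> 'a list \<Rightarrow> bool" where
  "walk R ps \<longleftrightarrow> (\<forall>i. Suc i < length ps \<longrightarrow> R (ps ! i) (ps ! Suc i))"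

lemma rtranclp_imp_distinct_walk:
  assumes "R\<^sup>*\<^sup>* x y"
  shows "\<exists>ps. ps \<noteq> [] \<and> hd ps = x \<and> last ps = y \<and> distinct ps \<and> walk R ps"
  using assms
proof (induction rule: rtranclp_induct)
  case base
  show ?case by (rule exI[of _ "[x]"]) (simp add: walk_def)
next
  case (step y z)
  then obtain ps where ps: "ps \<noteq> []" "hd ps = x" "last ps = y" "distinct ps" "walk R ps"
    by blast
  show ?case
  proof (cases "z \<in> set ps")
    case True
    then obtain i where i: "i < length ps" "ps ! i = z" by (meson in_set_conv_nth)
    let ?qs = "take (Suc i) ps"
    have "?qs = take i ps @ [z]" using i by (simp add: take_Suc_conv_app_nth)
    then have "last ?qs = z" by simp
    moreover have "walk R ?qs" using ps(5) i unfolding walk_def by auto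
    ultimately show ?thesis using ps by (intro exI[of _ ?qs]) (auto simp: hd_take)
  next
    case False
    have "walk R (ps @ [z])" unfolding walk_def
    proof (intro allI impI)
      fix j assume j: "Suc j < length (ps @ [z])"
      show "R ((ps @ [z]) ! j) ((ps @ [z]) ! Suc j)"
      proof (cases "Suc j < length ps")
        case True
        then show ?thesis using ps(5) by (simp add: walk_def nth_append)
      next
        case False
        then have "Suc j = length ps" using j by simp
        then have "j = length ps - 1" by simp
        then have "(ps @ [z]) ! j = y" "(ps @ [z]) ! Suc j = z"
          using ps(1,3) by (auto simp: nth_append last_conv_nth)
        then show ?thesis using step(2) by simp
      qed
    qed
    then show ?thesis using ps False by (intro exI[of _ "ps @ [z]"]) auto
  qed
qed

definition surplus :: "('a \<Rightarrow> nat) \<Rightarrow> ('a \<Rightarrow> nat) \<Rightarrow> 'a \<Rightarrow> int" where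
  "surplus ft f x = of_bool (f x = 1) - of_bool (ft x = 1)"

definition excess :: "('a \<Rightarrow> nat) \<Rightarrow> ('a \<Rightarrow> nat) \<Rightarrow> 'a set \<Rightarrow> int" where
  "excess ft f S = (\<Sum>x\<in>S. surplus ft f x)"

lemma excess_eq_ones_in:
  assumes "finite S"
  shows "excess ft f S = int (ones_in f S) - int (ones_in ft S)"
proof -
  have "int (card {x\<in>S. P x}) = (\<Sum>x\<in>S. if P x then 1 else 0)" for P
    using assms by (simp add: sum.inter_filter[symmetric])
  then show ?thesis
    unfolding excess_def surplus_def ones_in_def of_bool_def by (simp add: sum_subtractf)
qed

lemma ones_in_swap_tokens_same_side:
  assumes "u \<noteq> v" "f u = 1" "f v = 2" "finite S" "u \<in> S \<longleftrightarrow> v \<in> S"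
  shows "ones_in (swap_tokens f u v) S = ones_in f S"
proof (cases "u \<in> S")
  case True
  let ?B = "{x\<in>S. f x = 1}"
  have "{x\<in>S. swap_tokens f u v x = 1} = insert v (?B - {u})"
    using True assms by (auto simp: swap_tokens_def)
  moreover have "u \<in> ?B" "v \<notin> ?B - {u}" "finite ?B" using True assms by auto
  ultimately show ?thesis unfolding ones_in_def using card.remove[of ?B u] by simp
next
  case False
  then have "{x\<in>S. swap_tokens f u v x = 1} = {x\<in>S. f x = 1}"
    using assms by (auto simp: swap_tokens_def)
  then show ?thesis unfolding ones_in_def by simp
qed

lemma ones_in_swap_tokens_out:
  assumes "f u = 1" "f v = 2" "finite S" "u \<in> S" "v \<notin> S"
  shows "int (ones_in (swap_tokens f u v) S) = int (ones_in f S) - 1"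
proof -
  let ?B = "{x\<in>S. f x = 1}"
  have "{x\<in>S. swap_tokens f u v x = 1} = ?B - {u}"
    using assms by (auto simp: swap_tokens_def)
  moreover have "u \<in> ?B" "finite ?B" using assms by auto
  ultimately show ?thesis unfolding ones_in_def using card.remove[of ?B u] by simp
qed

locale tree_graph =
  fixes V :: "'a set" and E :: "'a \<Rightarrow> 'a \<Rightarrow> bool"
  assumes tree: "is_tree V E"
begin

lemma finite_V: "finite V"
  using tree unfolding is_tree_def simple_graph_def by blast

lemma E_sym: "E x y \<Longrightarrow> E y x"
  using tree unfolding is_tree_def simple_graph_def by blast

lemma E_in_V: "E x y \<Longrightarrow> x \<in> V \<and> y \<in> V"
  using tree unfolding is_tree_def simple_graph_def by blast

lemma E_irrefl: "\<not> E x x"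
  using tree unfolding is_tree_def simple_graph_def by blast

lemma E_connected: "x \<in> V \<Longrightarrow> y \<in> V \<Longrightarrow> E\<^sup>*\<^sup>* x y"
  using tree unfolding is_tree_def connected_graph_def by blast

lemma no_cycle: "\<not> is_cycle E cs"
  using tree unfolding is_tree_def by blast

abbreviation E_minus :: "'a set \<Rightarrow> 'a \<Rightarrow> 'a \<Rightarrow> bool" where
  "E_minus e \<equiv> \<lambda>a b. E a b \<and> {a, b} \<noteq> e"

definition side :: "'a \<Rightarrow> 'a \<Rightarrow> 'a set" where
  "side u v = comp_minus_edge V E {u, v} u"

lemma E_minus_rtranclp_sym: "(E_minus e)\<^sup>*\<^sup>* a b \<Longrightarrow> (E_minus e)\<^sup>*\<^sup>* b a"
proof (induction rule: rtranclp_induct)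
  case (step y z)
  have "E_minus e z y" using step(2) E_sym by (auto simp: insert_commute)
  then show ?case using step(3) by (rule converse_rtranclp_into_rtranclp)
qed simp

text \<open>A path avoiding the edge \<open>e\<close> from a vertex that cannot reach \<open>c\<close> this way
  never uses an edge at \<open>c\<close>, so it avoids any edge \<open>e'\<close> at \<open>c\<close> as well.\<close>
lemma E_minus_rtranclp_change_edge:
  assumes "(E_minus e)\<^sup>*\<^sup>* a x" "\<not> (E_minus e)\<^sup>*\<^sup>* a c" "c \<in> e'"
  shows "(E_minus e')\<^sup>*\<^sup>* a x"
  using assms(1)
proof (induction rule: rtranclp_induct)
  case (step y z)
  have "(E_minus e)\<^sup>*\<^sup>* a z" using step(1,2) by (rule rtranclp.rtrancl_into_rtrancl)
  then have "{y, z} \<noteq> e'" using step(1) assms(2,3) by auto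
  then have "E_minus e' y z" using step(2) by simp
  with step(3) show ?case by (rule rtranclp.rtrancl_into_rtrancl)
qed simp

lemma edge_separates:
  assumes "E u v"
  shows "\<not> (E_minus {u, v})\<^sup>*\<^sup>* u v"
proof
  assume "(E_minus {u, v})\<^sup>*\<^sup>* u v"
  from rtranclp_imp_distinct_walk[OF this] obtain ps
    where ps: "ps \<noteq> []" "hd ps = u" "last ps = v" "distinct ps"
    and walk: "walk (E_minus {u, v}) ps"
    by blast
  have "u \<noteq> v" using assms E_irrefl by blast
  have "length ps \<noteq> 1"
  proof
    assume "length ps = 1"
    then obtain p where "ps = [p]" by (metis One_nat_def length_0_conv length_Suc_conv)
    then show False using ps(2,3) \<open>u \<noteq> v\<close> by simp
  qed
  moreover have "length ps \<noteq> 2"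
  proof
    assume len: "length ps = 2"
    have "ps ! 0 = u" using ps(1,2) by (simp add: hd_conv_nth)
    moreover have "ps ! 1 = v" using ps(1,3) len by (simp add: last_conv_nth)
    moreover have "E_minus {u, v} (ps ! 0) (ps ! Suc 0)" using walk len unfolding walk_def by auto
    ultimately show False by simp
  qed
  moreover have "length ps \<noteq> 0" using ps(1) by simp
  ultimately have "length ps \<ge> 3" by linarith
  moreover have "E (last ps) (hd ps)" using ps assms E_sym by simp
  ultimately have "is_cycle E ps" using walk ps(4) unfolding is_cycle_def walk_def by simp
  then show False using no_cycle by blast
qed

lemma finite_comp_minus_edge: "finite (comp_minus_edge V E e x)"
  unfolding comp_minus_edge_def using finite_V by simp

lemma finite_side: "finite (side u v)"
  unfolding side_def by (rule finite_comp_minus_edge)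

lemma side_subset: "side u v \<subseteq> V"
  unfolding side_def comp_minus_edge_def by auto

lemma self_in_side: "E u v \<Longrightarrow> u \<in> side u v"
  unfolding side_def comp_minus_edge_def using E_in_V by auto

lemma other_notin_side: "E u v \<Longrightarrow> v \<notin> side u v"
  unfolding side_def comp_minus_edge_def using edge_separates by auto

lemma comp_minus_edge_other: "comp_minus_edge V E {u, v} v = side v u"
  unfolding side_def by (simp add: insert_commute)

lemma side_disjoint: "E u v \<Longrightarrow> side u v \<inter> side v u = {}"
proof (rule ccontr)
  assume e: "E u v" and "side u v \<inter> side v u \<noteq> {}"
  then obtain x where "(E_minus {u, v})\<^sup>*\<^sup>* u x" "(E_minus {u, v})\<^sup>*\<^sup>* v x"
    unfolding side_def comp_minus_edge_def by (auto simp: insert_commute)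
  then have "(E_minus {u, v})\<^sup>*\<^sup>* u v" using E_minus_rtranclp_sym by (meson rtranclp_trans)
  then show False using edge_separates e by blast
qed

lemma side_union:
  assumes e: "E u v"
  shows "side u v \<union> side v u = V"
proof
  show "V \<subseteq> side u v \<union> side v u"
  proof
    fix x assume "x \<in> V"
    then have "E\<^sup>*\<^sup>* u x" using E_connected E_in_V e by blast
    then show "x \<in> side u v \<union> side v u"
    proof (induction rule: rtranclp_induct)
      case base then show ?case using self_in_side e by auto
    next
      case (step y z)
      show ?case
      proof (cases "{y, z} = {u, v}")
        case True
        then show ?thesis using self_in_side[OF e] self_in_side[OF E_sym[OF e]] by auto
      next
        case False
        then have "E_minus {u, v} y z" "z \<in> V" using step(2) E_in_V by auto
        then show ?thesis using step(3) unfolding side_def comp_minus_edge_def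
          by (auto simp: insert_commute intro: rtranclp.rtrancl_into_rtrancl)
      qed
    qed
  qed
qed (use side_subset in auto)

lemma comp_minus_edge_closed:
  assumes "E a b" "{a, b} \<noteq> e"
  shows "a \<in> comp_minus_edge V E e x \<longleftrightarrow> b \<in> comp_minus_edge V E e x"
proof -
  have "E_minus e a b" "E_minus e b a" using assms E_sym by (auto simp: insert_commute)
  then show ?thesis using E_in_V assms(1) unfolding comp_minus_edge_def
    by (auto intro: rtranclp.rtrancl_into_rtrancl)
qed

lemma side_eq_insert_UN:
  assumes e: "E u v"
  shows "side u v = insert u (\<Union>w\<in>{w. E u w \<and> w \<noteq> v}. side w u)"
proof
  show "side u v \<subseteq> insert u (\<Union>w\<in>{w. E u w \<and> w \<noteq> v}. side w u)"
  proof
    fix x assume "x \<in> side u v"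
    then have xV: "x \<in> V" and path: "(E_minus {u, v})\<^sup>*\<^sup>* u x"
      unfolding side_def comp_minus_edge_def by auto
    from path have "x = u \<or> (\<exists>w. E u w \<and> w \<noteq> v \<and> (E_minus {w, u})\<^sup>*\<^sup>* w x)"
    proof (induction rule: rtranclp_induct)
      case (step y z)
      from step(3) show ?case
      proof
        assume "y = u"
        then show ?thesis using step(2) by auto
      next
        assume "\<exists>w. E u w \<and> w \<noteq> v \<and> (E_minus {w, u})\<^sup>*\<^sup>* w y"
        then obtain w where w: "E u w" "w \<noteq> v" "(E_minus {w, u})\<^sup>*\<^sup>* w y" by blast
        show ?thesis
        proof (cases "{y, z} = {w, u}")
          case True
          then show ?thesis using step(2) by (cases "y = u") (auto simp: doubleton_eq_iff)
        next
          case False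
          then have "E_minus {w, u} y z" using step(2) by simp
          then show ?thesis
            using w rtranclp.rtrancl_into_rtrancl[of "E_minus {w, u}" w y z] by blast
        qed
      qed
    qed simp
    then show "x \<in> insert u (\<Union>w\<in>{w. E u w \<and> w \<noteq> v}. side w u)"
      using xV unfolding side_def comp_minus_edge_def by auto
  qed
next
  show "insert u (\<Union>w\<in>{w. E u w \<and> w \<noteq> v}. side w u) \<subseteq> side u v"
  proof
    fix x assume "x \<in> insert u (\<Union>w\<in>{w. E u w \<and> w \<noteq> v}. side w u)"
    then consider "x = u" | w where "E u w" "w \<noteq> v" "x \<in> side w u" by auto
    then show "x \<in> side u v"
    proof cases
      case 1 then show ?thesis using self_in_side e by simp
    next
      case 2
      have xV: "x \<in> V" and p: "(E_minus {w, u})\<^sup>*\<^sup>* w x"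
        using 2(3) unfolding side_def comp_minus_edge_def by auto
      have "\<not> (E_minus {w, u})\<^sup>*\<^sup>* w u" using edge_separates E_sym 2(1) by blast
      then have "(E_minus {u, v})\<^sup>*\<^sup>* w x" using E_minus_rtranclp_change_edge[OF p] by blast
      moreover have "E_minus {u, v} u w" using 2 by (auto simp: doubleton_eq_iff)
      ultimately have "(E_minus {u, v})\<^sup>*\<^sup>* u x"
        using converse_rtranclp_into_rtranclp[of "E_minus {u, v}" u w x] by blast
      then show ?thesis using xV unfolding side_def comp_minus_edge_def by auto
    qed
  qed
qed

lemma sides_at_vertex_disjoint:
  assumes "E u w1" "E u w2" "w1 \<noteq> w2"
  shows "side w1 u \<inter> side w2 u = {}"
proof (rule ccontr)
  assume "side w1 u \<inter> side w2 u \<noteq> {}"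
  then obtain x where p1: "(E_minus {w1, u})\<^sup>*\<^sup>* w1 x" and p2: "(E_minus {w2, u})\<^sup>*\<^sup>* w2 x"
    unfolding side_def comp_minus_edge_def by auto
  have "\<not> (E_minus {w2, u})\<^sup>*\<^sup>* w2 u" using edge_separates E_sym assms(2) by blast
  then have "(E_minus {w1, u})\<^sup>*\<^sup>* w2 x" using E_minus_rtranclp_change_edge[OF p2] by blast
  then have "(E_minus {w1, u})\<^sup>*\<^sup>* w1 w2" using p1 E_minus_rtranclp_sym by (meson rtranclp_trans)
  moreover have "E_minus {w1, u} w2 u" using assms E_sym by (auto simp: doubleton_eq_iff)
  ultimately have "(E_minus {w1, u})\<^sup>*\<^sup>* w1 u"
    using rtranclp.rtrancl_into_rtrancl[of "E_minus {w1, u}" w1 w2 u] by blast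
  then show False using edge_separates E_sym assms(1) by blast
qed

lemma card_side_less:
  assumes "E u v" "E u w" "w \<noteq> v"
  shows "card (side w u) < card (side u v)"
proof -
  have "side w u \<subseteq> side u v" using side_eq_insert_UN[OF assms(1)] assms by auto
  moreover have "u \<in> side u v" "u \<notin> side w u"
    using self_in_side other_notin_side E_sym assms by auto
  ultimately have "side w u \<subset> side u v" by blast
  then show ?thesis by (rule psubset_card_mono[OF finite_side])
qed

lemma excess_side_decomp:
  assumes e: "E u v"
  shows "excess ft f (side u v)
    = surplus ft f u + (\<Sum>w\<in>{w. E u w \<and> w \<noteq> v}. excess ft f (side w u))"
proof -
  let ?W = "{w. E u w \<and> w \<noteq> v}"
  have "?W \<subseteq> V" using E_in_V by blast
  then have fin: "finite ?W" using finite_V finite_subset by blast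
  have "u \<notin> (\<Union>w\<in>?W. side w u)" using other_notin_side E_sym by auto
  then have "excess ft f (side u v) = surplus ft f u + excess ft f (\<Union>w\<in>?W. side w u)"
    unfolding excess_def side_eq_insert_UN[OF e] using fin finite_side by simp
  also have "excess ft f (\<Union>w\<in>?W. side w u) = (\<Sum>w\<in>?W. excess ft f (side w u))"
    unfolding excess_def using fin finite_side sides_at_vertex_disjoint
    by (intro sum.UNION_disjoint) auto
  finally show ?thesis .
qed

lemma excess_side_opposite:
  assumes "E u v" "ones_in f V = ones_in ft V"
  shows "excess ft f (side v u) = - excess ft f (side u v)"
proof -
  have "0 = excess ft f V" using excess_eq_ones_in[OF finite_V] assms(2) by simp
  also have "\<dots> = excess ft f (side u v) + excess ft f (side v u)"
    using sum.union_disjoint[OF finite_side finite_side side_disjoint[OF assms(1)]]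
      side_union[OF assms(1)] unfolding excess_def by simp
  finally show ?thesis by simp
qed

lemma diff_edge_eq_excess_side:
  assumes "E a b" "ones_in f V = ones_in ft V"
  shows "diff_edge V E ft f {a, b} = \<bar>excess ft f (side a b)\<bar>"
proof -
  define x where "x = (SOME x. x \<in> {a, b})"
  have "x \<in> {a, b}" unfolding x_def by (rule someI[of _ a]) simp
  moreover have diff: "diff_edge V E ft f {a, b} = \<bar>excess ft f (comp_minus_edge V E {a, b} x)\<bar>"
    unfolding diff_edge_def Let_def x_def[symmetric]
    using excess_eq_ones_in[OF finite_comp_minus_edge] by simp
  moreover have "\<bar>excess ft f (side b a)\<bar> = \<bar>excess ft f (side a b)\<bar>"
    using excess_side_opposite[OF assms] by simp
  ultimately show ?thesis
    using comp_minus_edge_other[of a b] unfolding side_def by fastforce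
qed

text \<open>Descending through the sides of \<open>T(a,b)\<close> keeps the excess positive until
  the tail of the edge carries a 1-token.\<close>
lemma positive_side_with_tail_one:
  assumes "E a b" "excess ft f (side a b) > 0"
  shows "\<exists>u v. E u v \<and> excess ft f (side u v) > 0 \<and> f u = 1"
  using assms
proof (induction "card (side a b)" arbitrary: a b rule: less_induct)
  case less
  show ?case
  proof (cases "f a = 1")
    case False
    then have "surplus ft f a \<le> 0" unfolding surplus_def by simp
    then have "0 < (\<Sum>w\<in>{w. E a w \<and> w \<noteq> b}. excess ft f (side w a))"
      using less.prems excess_side_decomp[OF less.prems(1), of ft f] by linarith
    then have "\<exists>w\<in>{w. E a w \<and> w \<noteq> b}. excess ft f (side w a) > 0"
      by (meson not_less sum_nonpos)
    then obtain w where w: "E a w" "w \<noteq> b" "excess ft f (side w a) > 0" by blast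
    show ?thesis
      using less.hyps[OF card_side_less[OF less.prems(1) w(1,2)] E_sym[OF w(1)] w(3)] .
  qed (use less.prems in blast)
qed

text \<open>Moving the edge forward keeps the tail a 1-token and the excess positive
  until the head carries a 2-token.\<close>
lemma positive_side_with_tail_one_head_two:
  assumes "token_placement V f" "ones_in f V = ones_in ft V"
    and "E a b" "excess ft f (side a b) > 0" "f a = 1"
  shows "\<exists>u v. E u v \<and> excess ft f (side u v) > 0 \<and> f u = 1 \<and> f v = 2"
  using assms(3-)
proof (induction "card (side b a)" arbitrary: a b rule: less_induct)
  case less
  show ?case
  proof (cases "f b = 2")
    case False
    have "f b \<in> {1, 2}" using assms(1) E_in_V[OF less.prems(1)] unfolding token_placement_def by blast
    with False have fb: "f b = 1" by simp
    then have "surplus ft f b \<ge> 0" unfolding surplus_def by simp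
    moreover have "excess ft f (side b a) < 0"
      using excess_side_opposite[OF less.prems(1) assms(2)] less.prems(2) by simp
    ultimately have "(\<Sum>w\<in>{w. E b w \<and> w \<noteq> a}. excess ft f (side w b)) < 0"
      using excess_side_decomp[OF E_sym[OF less.prems(1)], of ft f] by linarith
    then have "\<exists>w\<in>{w. E b w \<and> w \<noteq> a}. excess ft f (side w b) < 0"
      by (meson not_less sum_nonneg)
    then obtain w where w: "E b w" "w \<noteq> a" "excess ft f (side w b) < 0" by blast
    have "excess ft f (side b w) > 0"
      using excess_side_opposite[OF w(1) assms(2)] w(3) by simp
    then show ?thesis
      using less.hyps[OF card_side_less[OF E_sym[OF less.prems(1)] w(1,2)] w(1)] fb by blast
  qed (use less.prems in blast)
qed

lemma exists_positive_side:
  assumes "ones_in f V = ones_in ft V" "D_val V E ft f \<noteq> 0"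
  shows "\<exists>a b. E a b \<and> excess ft f (side a b) > 0"
proof -
  obtain e where "e \<in> edges E" "diff_edge V E ft f e \<noteq> 0"
    using assms(2) unfolding D_val_def by (meson sum.neutral)
  then obtain a b where ab: "E a b" "excess ft f (side a b) \<noteq> 0"
    unfolding edges_def using diff_edge_eq_excess_side[OF _ assms(1)] by fastforce
  show ?thesis
  proof (cases "excess ft f (side a b) > 0")
    case False
    then have "excess ft f (side b a) > 0"
      using ab excess_side_opposite[OF ab(1) assms(1)] by simp
    then show ?thesis using E_sym[OF ab(1)] by blast
  qed (use ab in blast)
qed

lemma diff_edge_swap_tokens_other:
  assumes "E u v" "f u = 1" "f v = 2" "{u, v} \<noteq> e"
  shows "diff_edge V E ft (swap_tokens f u v) e = diff_edge V E ft f e"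
proof -
  have "u \<noteq> v" using assms(1) E_irrefl by blast
  then show ?thesis unfolding diff_edge_def Let_def
    using ones_in_swap_tokens_same_side[OF _ assms(2,3) finite_comp_minus_edge
        comp_minus_edge_closed[OF assms(1,4)]] by simp
qed

lemma D_val_swap_tokens:
  assumes "ones_in f V = ones_in ft V"
    and uv: "E u v" "f u = 1" "f v = 2" "excess ft f (side u v) > 0"
  shows "D_val V E ft (swap_tokens f u v) = D_val V E ft f - 1"
proof -
  let ?g = "swap_tokens f u v"
  have "edges E \<subseteq> Pow V" unfolding edges_def using E_in_V by blast
  then have fin: "finite (edges E)" using finite_V by (meson finite_Pow_iff finite_subset)
  have uv_edge: "{u, v} \<in> edges E" unfolding edges_def using uv by blast
  have "u \<noteq> v" using uv(1) E_irrefl by blast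
  then have "ones_in ?g V = ones_in ft V"
    using ones_in_swap_tokens_same_side[OF _ uv(2,3) finite_V] E_in_V[OF uv(1)] assms(1) by simp
  then have "diff_edge V E ft ?g {u, v} = \<bar>excess ft ?g (side u v)\<bar>"
    using diff_edge_eq_excess_side[OF uv(1)] by blast
  also have "excess ft ?g (side u v) = excess ft f (side u v) - 1"
    using ones_in_swap_tokens_out[OF uv(2,3) finite_side self_in_side[OF uv(1)] other_notin_side[OF uv(1)]]
    by (simp add: excess_eq_ones_in[OF finite_side])
  also have "\<bar>excess ft f (side u v) - 1\<bar> = diff_edge V E ft f {u, v} - 1"
    using diff_edge_eq_excess_side[OF uv(1) assms(1)] uv(4) by simp
  finally have "diff_edge V E ft ?g {u, v} = diff_edge V E ft f {u, v} - 1" .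
  moreover have "(\<Sum>e\<in>edges E - {{u, v}}. diff_edge V E ft ?g e)
      = (\<Sum>e\<in>edges E - {{u, v}}. diff_edge V E ft f e)"
    using diff_edge_swap_tokens_other[OF uv(1-3)] by (intro sum.cong) auto
  ultimately show ?thesis
    unfolding D_val_def by (simp add: sum.remove[OF fin uv_edge])
qed

end

theorem mainTheorem8:
  fixes V :: "'a set" and E :: "'a \<Rightarrow> 'a \<Rightarrow> bool" and ft f :: "'a \<Rightarrow> nat"
  assumes "is_tree V E"
    and "token_placement V ft"
    and "token_placement V f"
    and "ones_in f V = ones_in ft V"
    and "D_val V E ft f \<noteq> 0"
  shows "\<exists>u v. E u v \<and> D_val V E ft (swap_tokens f u v) = D_val V E ft f - 1"
proof -
  interpret tree_graph V E by unfold_locales (rule assms(1))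
  obtain a b where "E a b" "excess ft f (side a b) > 0"
    using exists_positive_side assms(4,5) by blast
  then obtain a' b' where "E a' b'" "excess ft f (side a' b') > 0" "f a' = 1"
    using positive_side_with_tail_one by blast
  then obtain u v where "E u v" "excess ft f (side u v) > 0" "f u = 1" "f v = 2"
    using positive_side_with_tail_one_head_two assms(3,4) by blast
  then show ?thesis using D_val_swap_tokens assms(4) by blast
qed

end
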